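(* Assume the standing conventions of the context, and suppose $\mathcal D_{Z,Z'}\neq\emptyset$. Then: (i) there is a set $\Psi'_0$ of pairwise disjoint consecutive pairs in $Z'_{\mathrm I}$ such that $D_Z=\{\Lambda_{\Psi'}\mid \Psi'\le\Psi'_0\}$; (ii) there is a set $\Psi_0$ of pairwise disjoint consecutive pairs in $Z_{\mathrm I}$ such that $D_{Z'}=\{\Lambda_{\Psi}\mid \Psi\le\Psi_0\}$. (In fact $\Psi'_0$ may be taken to be the union of all consecutive pairs $\Psi'$ in $Z'_{\mathrm I}$ with $(Z,\Lambda_{\Psi'})\in\mathcal D_{Z,Z'}$, and $\Psi_0$ the union of all consecutive pairs $\Psi$ in $Z_{\mathrm I}$ with $(\Lambda_\Psi,Z')\in\mathcal D_{Z,Z'}$.)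
   Context: A symbol is an array $\Lambda=\binom{a'_1,\ldots,a'_{m_1}}{b'_1,\ldots,b'_{m_2}}$ of two strictly decreasing finite sequences of nonnegative integers (top row, bottom row); its defect is $\mathrm{def}(\Lambda)=m_1-m_2$. Standing assumptions: $Z=\binom{a_1,\ldots,a_{m+1}}{b_1,\ldots,b_m}$ is a special symbol of defect $1$, i.e. $a_1\ge b_1\ge a_2\ge b_2\ge\cdots\ge b_m\ge a_{m+1}$; $Z'=\binom{c_1,\ldots,c_{m'}}{d_1,\ldots,d_{m'}}$ is a special symbol of defect $0$, i.e. $c_1\ge d_1\ge c_2\ge d_2\ge\cdots\ge c_{m'}\ge d_{m'}$; and $m'\in\{m,m+1\}$. For a symbol $Y$, $Y_{\mathrm I}$ is the set of entries of $Y$ occurring in exactly one row. For $M\subset Z_{\mathrm I}$, $\Lambda_M$ is the symbol obtained from $Z$ by moving every entry of $M$ to the other row (rows re-sorted decreasingly); for $N\subset Z'_{\mathrm I}$, $\Lambda_N$ is obtained from $Z'$ in the same way. $\overline{\mathcal S}_Z=\{\Lambda_M: M\subset Z_{\mathrm I}\}$, $\overline{\mathcal S}_{Z'}=\{\Lambda_N:N\subset Z'_{\mathrm I}\}$; $\mathcal S_{Z,1}$ (resp. $\mathcal S_{Z',0}$) is the set of elements of $\overline{\mathcal S}_Z$ of defect $1$ (resp. of $\overline{\mathcal S}_{Z'}$ of defect $0$). A consecutive pair in $Z'_{\mathrm I}$ is a two-element subset $\{c_k,d_l\}\subset Z'_{\mathrm I}$, written $\binom{c_k}{d_l}$, with $l\in\{k-1,k\}$;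 a consecutive pair in $Z_{\mathrm I}$ is $\{a_k,b_l\}\subset Z_{\mathrm I}$, written $\binom{a_k}{b_l}$, with $l\in\{k-1,k\}$. For a set $\Psi_0$ of pairwise disjoint consecutive pairs, viewed also as the subset given by the union of its pairs, $\Psi\le\Psi_0$ means that $\Psi$ is the union of some (possibly none) of the pairs in $\Psi_0$. Relation $\overline{\mathcal B}^+_{Z,Z'}\subset\overline{\mathcal S}_Z\times\overline{\mathcal S}_{Z'}$: for $\Lambda=\binom{a'_1,\ldots,a'_{m_1}}{b'_1,\ldots,b'_{m_2}}\in\overline{\mathcal S}_Z$ and $\Lambda'=\binom{c'_1,\ldots,c'_{m'_1}}{d'_1,\ldots,d'_{m'_2}}\in\overline{\mathcal S}_{Z'}$, $(\Lambda,\Lambda')\in\overline{\mathcal B}^+_{Z,Z'}$ iff $\mathrm{def}(\Lambda')=1-\mathrm{def}(\Lambda)$ and: if $m'=m$, $a'_i>d'_i\ge a'_{i+1}$ for $1\le i\le m'_2$ and $b'_{i-1}>c'_i\ge b'_i$ for $1\le i\le m'_1$; if $m'=m+1$, $a'_i\ge d'_i>a'_{i+1}$ for $1\le i\le m'_2$ and $b'_{i-1}\ge c'_i>b'_i$ for $1\le i\le m'_1$; here $b'_0=+\infty$ and nonexistent entries $a'_j,b'_j$ beyond the row lengths are $-\infty$. Then $\mathcal D_{Z,Z'}=\overline{\mathcal B}^+_{Z,Z'}\cap(\mathcal S_{Z,1}\times\mathcal S_{Z',0})$, $D_Z=\{\Lambda'\mid (Z,\Lambda')\in\mathcal D_{Z,Z'}\}$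 and $D_{Z'}=\{\Lambda\mid(\Lambda,Z')\in\mathcal D_{Z,Z'}\}$. *)

theory Defs
  imports Main "HOL-Library.Extended_Real"
begin

text \<open>A symbol is a pair (top row, bottom row) of finite sets of naturals;
  a strictly decreasing finite sequence is identified with its set of entries.\<close>
type_synonym symbol = "nat set \<times> nat set"

definition nth_dec :: "nat set \<Rightarrow> nat \<Rightarrow> nat" where
  "nth_dec A i = rev (sorted_list_of_set A) ! (i - 1)"

definition ent :: "nat set \<Rightarrow> nat \<Rightarrow> ereal" where
  "ent A i = (if 1 \<le> i \<and> i \<le> card A then ereal (real (nth_dec A i)) else MInfty)"

definition is_symbol :: "symbol \<Rightarrow> bool" where
  "is_symbol Y \<longleftrightarrow> finite (fst Y) \<and> finite (snd Y)"

definition defect :: "symbol \<Rightarrow> int" where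
  "defect Y = int (card (fst Y)) - int (card (snd Y))"

definition special1 :: "nat \<Rightarrow> symbol \<Rightarrow> bool" where
  "special1 m Z \<longleftrightarrow> is_symbol Z \<and> card (fst Z) = m + 1 \<and> card (snd Z) = m \<and>
     (\<forall>i. 1 \<le> i \<and> i \<le> m \<longrightarrow>
        nth_dec (fst Z) i \<ge> nth_dec (snd Z) i \<and> nth_dec (snd Z) i \<ge> nth_dec (fst Z) (i + 1))"

definition special0 :: "nat \<Rightarrow> symbol \<Rightarrow> bool" where
  "special0 m' Z' \<longleftrightarrow> is_symbol Z' \<and> card (fst Z') = m' \<and> card (snd Z') = m' \<and>
     (\<forall>i. 1 \<le> i \<and> i \<le> m' \<longrightarrow> nth_dec (fst Z') i \<ge> nth_dec (snd Z') i) \<and>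
     (\<forall>i. 1 \<le> i \<and> i < m' \<longrightarrow> nth_dec (snd Z') i \<ge> nth_dec (fst Z') (i + 1))"

definition singles :: "symbol \<Rightarrow> nat set" where
  "singles Y = (fst Y - snd Y) \<union> (snd Y - fst Y)"

definition move :: "symbol \<Rightarrow> nat set \<Rightarrow> symbol" where
  "move Y M = ((fst Y - M) \<union> (snd Y \<inter> M), (snd Y - M) \<union> (fst Y \<inter> M))"

definition Sbar :: "symbol \<Rightarrow> symbol set" where
  "Sbar Y = {move Y M | M. M \<subseteq> singles Y}"

definition Sdef :: "symbol \<Rightarrow> int \<Rightarrow> symbol set" where
  "Sdef Y d = {L \<in> Sbar Y. defect L = d}"

definition consec_pair :: "symbol \<Rightarrow> nat set \<Rightarrow> bool" where
  "consec_pair Y P \<longleftrightarrow> (\<exists>k l. 1 \<le> k \<and> k \<le> card (fst Y) \<and> 1 \<le> l \<and> l \<le> card (snd Y) \<and>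
      (l = k \<or> l + 1 = k) \<and> P = {nth_dec (fst Y) k, nth_dec (snd Y) l} \<and> P \<subseteq> singles Y)"

definition Bplus :: "symbol \<Rightarrow> symbol \<Rightarrow> (symbol \<times> symbol) set" where
  "Bplus Z Z' = {(L, L'). L \<in> Sbar Z \<and> L' \<in> Sbar Z' \<and> defect L' = 1 - defect L \<and>
     (let m = card (snd Z); m' = card (fst Z');
          A = fst L; B = snd L; C = fst L'; D = snd L';
          bprev = (\<lambda>i. if i = 1 then PInfty else ent B (i - 1)) in
      (m' = m \<longrightarrow>
         (\<forall>i. 1 \<le> i \<and> i \<le> card D \<longrightarrow> ent A i > ent D i \<and> ent D i \<ge> ent A (i + 1)) \<and>
         (\<forall>i. 1 \<le> i \<and> i \<le> card C \<longrightarrow> bprev i > ent C i \<and> ent C i \<ge> ent B i)) \<and>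
      (m' = m + 1 \<longrightarrow>
         (\<forall>i. 1 \<le> i \<and> i \<le> card D \<longrightarrow> ent A i \<ge> ent D i \<and> ent D i > ent A (i + 1)) \<and>
         (\<forall>i. 1 \<le> i \<and> i \<le> card C \<longrightarrow> bprev i \<ge> ent C i \<and> ent C i > ent B i)))}"

definition DZZ :: "symbol \<Rightarrow> symbol \<Rightarrow> (symbol \<times> symbol) set" where
  "DZZ Z Z' = Bplus Z Z' \<inter> (Sdef Z 1 \<times> Sdef Z' 0)"

end

theory Submission
  imports Defs
begin

(* Write cnt_ge X t for the number of entries of a row X that are at least t. Comparisons
   between the i-th entries of two rows turn into inequalities between counting functions, so
   the relation B+ becomes a system of interlacing inequalities between the counting functions
   of the four rows. Moving a set N of singles to the other row adds an integer-valued
   transfer to the counting function of the top row and subtracts it from the bottom one.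

   For a special symbol each row count is determined by the sum of the two, and moves do not
   change that sum; averaging the inequalities of any element of D_{Z,Z'} therefore shows that
   (Z, Z') lies in D_{Z,Z'}. With Z fixed, the inequalities confine the counting functions of
   the moved rows of Z' to bands of width two given by Z. Where a band has width one the
   transfer must vanish, and between two such barriers each row of Z' has at most one entry.
   Hence an admissible N is a disjoint union of pairs {x, y} of neighbouring entries from
   different rows, which are consecutive pairs, and every union of such pairs is admissible.
   The same argument with Z' fixed gives the second statement. *)

section \<open>Counting functions of rows\<close>

definition cnt_ge :: "nat set \<Rightarrow> nat \<Rightarrow> nat" where
  "cnt_ge X t = card {x\<in>X. t \<le> x}"

lemma nth_dec_in_cnt_ge:
  assumes "finite X" and "1 \<le> j" "j \<le> card X"
  shows "nth_dec X j \<in> X" and "cnt_ge X (nth_dec X j) = j"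
proof -
  define xs where "xs = rev (sorted_list_of_set X)"
  have set_xs: "set xs = X" and len: "length xs = card X" and "distinct xs"
    using assms(1) by (auto simp: xs_def)
  have "sorted_wrt (>) xs"
    by (simp add: xs_def sorted_wrt_rev strict_sorted_iff)
  then have order: "xs ! b \<le> xs ! a \<longleftrightarrow> a \<le> b" if "a < length xs" "b < length xs" for a b
    using that by (cases a b rule: linorder_cases) (auto dest: sorted_wrt_nth_less)
  have nth: "nth_dec X j = xs ! (j - 1)" and j: "j - 1 < length xs"
    using assms by (simp_all add: nth_dec_def xs_def len)
  show "nth_dec X j \<in> X"
    using nth j set_xs nth_mem by metis
  have "{x\<in>X. nth_dec X j \<le> x} = (\<lambda>i. xs ! i) ` {..<j}"
  proof (intro set_eqI iffI)
    fix x assume "x \<in> {x\<in>X. nth_dec X j \<le> x}"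
    then have "x \<in> set xs" "xs ! (j - 1) \<le> x"
      using nth set_xs by auto
    then obtain i where "i < length xs" "x = xs ! i" "xs ! (j - 1) \<le> xs ! i"
      by (metis in_set_conv_nth)
    then show "x \<in> (\<lambda>i. xs ! i) ` {..<j}"
      using order[OF _ j] assms(2) by fastforce
  next
    fix x assume "x \<in> (\<lambda>i. xs ! i) ` {..<j}"
    then obtain i where "i < j" "x = xs ! i" by blast
    then show "x \<in> {x\<in>X. nth_dec X j \<le> x}"
      using order[of i "j - 1"] j set_xs nth by auto
  qed
  moreover have "inj_on (\<lambda>i. xs ! i) {..<j}"
    using \<open>distinct xs\<close> j by (auto simp: inj_on_def nth_eq_iff_index_eq)
  ultimately show "cnt_ge X (nth_dec X j) = j"
    by (simp add: cnt_ge_def card_image)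
qed

lemma cnt_ge_le_card: "finite X \<Longrightarrow> cnt_ge X t \<le> card X"
  unfolding cnt_ge_def by (intro card_mono) auto

lemma cnt_ge_0 [simp]: "cnt_ge X 0 = card X"
  by (simp add: cnt_ge_def)

lemma cnt_ge_antimono: "finite X \<Longrightarrow> s \<le> t \<Longrightarrow> cnt_ge X t \<le> cnt_ge X s"
  unfolding cnt_ge_def by (intro card_mono) auto

lemma cnt_ge_split:
  assumes "finite X" "a \<le> b"
  shows "cnt_ge X a = cnt_ge X b + card {x\<in>X. a \<le> x \<and> x < b}"
proof -
  have "{x\<in>X. a \<le> x} = {x\<in>X. b \<le> x} \<union> {x\<in>X. a \<le> x \<and> x < b}"
    using assms(2) by auto
  then show ?thesis
    unfolding cnt_ge_def using assms(1) by (simp add: card_Un_disjoint disjoint_iff)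
qed

lemma cnt_ge_Suc: "finite X \<Longrightarrow> cnt_ge X t = cnt_ge X (Suc t) + (if t \<in> X then 1 else 0)"
proof -
  assume "finite X"
  moreover have "{x\<in>X. t \<le> x \<and> x < Suc t} = (if t \<in> X then {t} else {})"
    by (auto simp: less_Suc_eq)
  ultimately show ?thesis
    using cnt_ge_split[of X t "Suc t"] by simp
qed

lemma cnt_ge_Suc_le: "finite X \<Longrightarrow> cnt_ge X (Suc t) \<le> cnt_ge X t \<and> cnt_ge X t \<le> cnt_ge X (Suc t) + 1"
  using cnt_ge_Suc[of X t] by simp

lemma cnt_ge_Suc_diff_le:
  "finite X \<Longrightarrow> cnt_ge X (Suc t - s) \<le> cnt_ge X (t - s) \<and> cnt_ge X (t - s) \<le> cnt_ge X (Suc t - s) + 1"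
  using cnt_ge_Suc_le[of X "t - s"] by (cases "s \<le> t") (simp_all add: Suc_diff_le)

lemma all_cnt_ge_diff1_le_iff:
  assumes "finite P"
  shows "(\<forall>t. cnt_ge X (t - 1) \<le> cnt_ge P t + k) \<longleftrightarrow> (\<forall>t. cnt_ge X t \<le> cnt_ge P (Suc t) + k)"
proof (intro iffI allI)
  fix t assume "\<forall>t. cnt_ge X t \<le> cnt_ge P (Suc t) + k"
  then show "cnt_ge X (t - 1) \<le> cnt_ge P t + k"
    using cnt_ge_Suc_le[OF assms, of 0] by (cases t) (auto dest: spec[of _ 0])
qed (auto dest: spec[of _ "Suc _"])

lemma le_cnt_ge_iff:
  assumes "finite X" and "1 \<le> j"
  shows "j \<le> cnt_ge X t \<longleftrightarrow> j \<le> card X \<and> t \<le> nth_dec X j"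
proof
  assume j: "j \<le> cnt_ge X t"
  then have "j \<le> card X"
    using cnt_ge_le_card[OF assms(1)] order_trans by blast
  moreover have "t \<le> nth_dec X j"
  proof (rule ccontr)
    assume "\<not> t \<le> nth_dec X j"
    then have "cnt_ge X t \<le> cnt_ge X (Suc (nth_dec X j))"
      using cnt_ge_antimono[OF assms(1)] by simp
    also have "\<dots> < j"
      using cnt_ge_Suc[OF assms(1), of "nth_dec X j"] nth_dec_in_cnt_ge[OF assms \<open>j \<le> card X\<close>] by simp
    finally show False using j by simp
  qed
  ultimately show "j \<le> card X \<and> t \<le> nth_dec X j" ..
next
  assume "j \<le> card X \<and> t \<le> nth_dec X j"
  then show "j \<le> cnt_ge X t"
    using nth_dec_in_cnt_ge[OF assms] cnt_ge_antimono[OF assms(1)] by metis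
qed

lemma nth_dec_cnt_ge:
  assumes "finite X" and "x \<in> X"
  shows "1 \<le> cnt_ge X x" "cnt_ge X x \<le> card X" "nth_dec X (cnt_ge X x) = x"
proof -
  have Suc: "cnt_ge X x = Suc (cnt_ge X (Suc x))"
    using cnt_ge_Suc[OF assms(1), of x] assms(2) by simp
  then show "1 \<le> cnt_ge X x" by simp
  show "cnt_ge X x \<le> card X" using cnt_ge_le_card[OF assms(1)] .
  then show "nth_dec X (cnt_ge X x) = x"
    using le_cnt_ge_iff[OF assms(1) \<open>1 \<le> cnt_ge X x\<close>, of x]
      le_cnt_ge_iff[OF assms(1) \<open>1 \<le> cnt_ge X x\<close>, of "Suc x"] Suc by simp
qed

lemma nth_dec_shift_le_iff_cnt_ge:
  assumes "finite X" "finite Y"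
  shows "(\<forall>i. 1 \<le> i \<longrightarrow> i + k \<le> card Y \<longrightarrow> i \<le> card X \<and> nth_dec Y (i + k) + d \<le> nth_dec X i)
     \<longleftrightarrow> (\<forall>t. cnt_ge Y t \<le> cnt_ge X (t + d) + k)"
proof (intro iffI allI impI)
  fix t assume H: "\<forall>i. 1 \<le> i \<longrightarrow> i + k \<le> card Y \<longrightarrow> i \<le> card X \<and> nth_dec Y (i + k) + d \<le> nth_dec X i"
  show "cnt_ge Y t \<le> cnt_ge X (t + d) + k"
  proof (rule ccontr)
    assume "\<not> ?thesis"
    then have "cnt_ge X (t + d) + 1 + k \<le> cnt_ge Y t" by simp
    then have "cnt_ge X (t + d) + 1 + k \<le> card Y" "t \<le> nth_dec Y (cnt_ge X (t + d) + 1 + k)"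
      using le_cnt_ge_iff[OF assms(2)] by auto
    then have "cnt_ge X (t + d) + 1 \<le> cnt_ge X (t + d)"
      using H le_cnt_ge_iff[OF assms(1), of "cnt_ge X (t + d) + 1" "t + d"] by fastforce
    then show False by simp
  qed
next
  fix i assume H: "\<forall>t. cnt_ge Y t \<le> cnt_ge X (t + d) + k" and "1 \<le> i" "i + k \<le> card Y"
  then have "i + k \<le> cnt_ge Y (nth_dec Y (i + k))"
    using le_cnt_ge_iff[OF assms(2)] by simp
  then have "i \<le> cnt_ge X (nth_dec Y (i + k) + d)"
    using H by (meson add_le_cancel_right order_trans)
  then show "i \<le> card X \<and> nth_dec Y (i + k) + d \<le> nth_dec X i"
    using le_cnt_ge_iff[OF assms(1) \<open>1 \<le> i\<close>] by simp
qed

lemma ent_shift_le_iff_cnt_ge: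
  assumes "finite X" "finite Y" "card Y \<le> n + k" "n \<le> card X"
  shows "(\<forall>i. 1 \<le> i \<and> i \<le> n \<longrightarrow> ent Y (i + k) \<le> ent X i) \<longleftrightarrow> (\<forall>t. cnt_ge Y t \<le> cnt_ge X t + k)"
proof -
  have "(\<forall>i. 1 \<le> i \<and> i \<le> n \<longrightarrow> ent Y (i + k) \<le> ent X i) \<longleftrightarrow>
        (\<forall>i. 1 \<le> i \<longrightarrow> i + k \<le> card Y \<longrightarrow> i \<le> card X \<and> nth_dec Y (i + k) + 0 \<le> nth_dec X i)"
    using assms(3,4) by (auto simp: ent_def)
  then show ?thesis
    using nth_dec_shift_le_iff_cnt_ge[OF assms(1,2), of k 0] by simp
qed

lemma ent_shift_less_iff_cnt_ge:
  assumes "finite X" "finite Y" "card Y \<le> n + k" "n \<le> card X"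
  shows "(\<forall>i. 1 \<le> i \<and> i \<le> n \<longrightarrow> ent Y (i + k) < ent X i) \<longleftrightarrow> (\<forall>t. cnt_ge Y t \<le> cnt_ge X (Suc t) + k)"
proof -
  have "(\<forall>i. 1 \<le> i \<and> i \<le> n \<longrightarrow> ent Y (i + k) < ent X i) \<longleftrightarrow>
        (\<forall>i. 1 \<le> i \<longrightarrow> i + k \<le> card Y \<longrightarrow> i \<le> card X \<and> nth_dec Y (i + k) + 1 \<le> nth_dec X i)"
    using assms(3,4) by (auto simp: ent_def)
  then show ?thesis
    using nth_dec_shift_le_iff_cnt_ge[OF assms(1,2), of k 1] by simp
qed

lemma ent_prev_shift_iff:
  assumes "\<And>i. R (ent C i) PInfty"
  shows "(\<forall>i. 1 \<le> i \<and> i \<le> card C \<longrightarrow> R (ent C i) (if i = 1 then PInfty else ent B (i - 1)))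
     \<longleftrightarrow> (\<forall>i. 1 \<le> i \<and> i \<le> card C - 1 \<longrightarrow> R (ent C (i + 1)) (ent B i))"
proof (intro iffI allI impI)
  fix i assume "\<forall>i. 1 \<le> i \<and> i \<le> card C \<longrightarrow> R (ent C i) (if i = 1 then PInfty else ent B (i - 1))"
    and "1 \<le> i \<and> i \<le> card C - 1"
  then show "R (ent C (i + 1)) (ent B i)"
    by (auto dest: spec[of _ "i + 1"])
next
  fix i assume H: "\<forall>i. 1 \<le> i \<and> i \<le> card C - 1 \<longrightarrow> R (ent C (i + 1)) (ent B i)"
    and i: "1 \<le> i \<and> i \<le> card C"
  show "R (ent C i) (if i = 1 then PInfty else ent B (i - 1))"
  proof (cases "i = 1")
    case False
    then have "1 \<le> i - 1 \<and> i - 1 \<le> card C - 1" using i by linarith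
    then show ?thesis using H False i by fastforce
  qed (use assms in auto)
qed

lemma ent_less_PInfty: "ent X i < PInfty"
  by (simp add: ent_def)

lemma ent_prev_less_iff_cnt_ge:
  assumes "finite B" "finite C" "card C \<le> card B + 1"
  shows "(\<forall>i. 1 \<le> i \<and> i \<le> card C \<longrightarrow> ent C i < (if i = 1 then PInfty else ent B (i - 1)))
      \<longleftrightarrow> (\<forall>t. cnt_ge C t \<le> cnt_ge B (Suc t) + 1)"
proof -
  have "(\<forall>i. 1 \<le> i \<and> i \<le> card C \<longrightarrow> ent C i < (if i = 1 then PInfty else ent B (i - 1)))
    \<longleftrightarrow> (\<forall>i. 1 \<le> i \<and> i \<le> card C - 1 \<longrightarrow> ent C (i + 1) < ent B i)"
    by (rule ent_prev_shift_iff) (rule ent_less_PInfty)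
  also have "\<dots> \<longleftrightarrow> (\<forall>t. cnt_ge C t \<le> cnt_ge B (Suc t) + 1)"
    by (rule ent_shift_less_iff_cnt_ge) (use assms in auto)
  finally show ?thesis .
qed

lemma ent_prev_le_iff_cnt_ge:
  assumes "finite B" "finite C" "card C \<le> card B + 1"
  shows "(\<forall>i. 1 \<le> i \<and> i \<le> card C \<longrightarrow> ent C i \<le> (if i = 1 then PInfty else ent B (i - 1)))
      \<longleftrightarrow> (\<forall>t. cnt_ge C t \<le> cnt_ge B t + 1)"
proof -
  have "(\<forall>i. 1 \<le> i \<and> i \<le> card C \<longrightarrow> ent C i \<le> (if i = 1 then PInfty else ent B (i - 1)))
    \<longleftrightarrow> (\<forall>i. 1 \<le> i \<and> i \<le> card C - 1 \<longrightarrow> ent C (i + 1) \<le> ent B i)"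
    by (rule ent_prev_shift_iff) simp
  also have "\<dots> \<longleftrightarrow> (\<forall>t. cnt_ge C t \<le> cnt_ge B t + 1)"
    by (rule ent_shift_le_iff_cnt_ge) (use assms in auto)
  finally show ?thesis .
qed

section \<open>Balanced rows\<close>

definition balanced :: "nat set \<Rightarrow> nat set \<Rightarrow> bool" where
  "balanced U V \<longleftrightarrow> (\<forall>t. cnt_ge V t \<le> cnt_ge U t \<and> cnt_ge U t \<le> cnt_ge V t + 1)"

lemma balanced_iff_nth_dec:
  assumes "finite U" "finite V"
  shows "balanced U V \<longleftrightarrow>
    (\<forall>i. 1 \<le> i \<longrightarrow> i \<le> card V \<longrightarrow> i \<le> card U \<and> nth_dec V i \<le> nth_dec U i) \<and>
    (\<forall>i. 1 \<le> i \<longrightarrow> i + 1 \<le> card U \<longrightarrow> i \<le> card V \<and> nth_dec U (i + 1) \<le> nth_dec V i)"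
  using nth_dec_shift_le_iff_cnt_ge[OF assms, of 0 0] nth_dec_shift_le_iff_cnt_ge[OF assms(2,1), of 1 0]
  by (auto simp: balanced_def)

lemma special1_balanced: "special1 m Z \<Longrightarrow> balanced (fst Z) (snd Z)"
  by (simp add: special1_def is_symbol_def balanced_iff_nth_dec)

lemma special0_balanced: "special0 m' Z' \<Longrightarrow> balanced (fst Z') (snd Z')"
  by (simp add: special0_def is_symbol_def balanced_iff_nth_dec)

lemma consec_pair_if_adjacent:
  assumes "finite U" "finite V" "balanced U V"
    and x: "x \<in> U" "x \<notin> V" and y: "y \<in> V" "y \<notin> U"
    and between: "\<forall>z\<in>U \<union> V. \<not> (min x y < z \<and> z < max x y)"
  shows "consec_pair (U, V) {x, y}"
proof -
  have bal: "cnt_ge V t \<le> cnt_ge U t" "cnt_ge U t \<le> cnt_ge V t + 1" for t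
    using assms(3) by (auto simp: balanced_def)
  have "cnt_ge V y = cnt_ge U x \<or> cnt_ge V y + 1 = cnt_ge U x"
  proof (cases "y < x")
    case True
    then have "z \<notin> U \<union> V" if "y < z" "z < x" for z
      using between that by (auto simp: min_def max_def)
    then have "{z\<in>U. y \<le> z \<and> z < x} = {}" "{z\<in>V. y \<le> z \<and> z < x} = {y}"
      using x y True by (auto simp: le_less)
    then have "cnt_ge U y = cnt_ge U x" "cnt_ge V y = cnt_ge V x + 1"
      using cnt_ge_split[OF assms(1), of y x] cnt_ge_split[OF assms(2), of y x] True by simp_all
    then show ?thesis
      using bal[of x] bal[of y] by simp
  next
    case False
    then have "x < y" using x y by (cases "x = y") auto
    then have "z \<notin> U \<union> V" if "x < z" "z < y" for z
      using between that by (auto simp: min_def max_def)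
    then have "{z\<in>V. x \<le> z \<and> z < y} = {}" "{z\<in>U. x \<le> z \<and> z < y} = {x}"
      using x y \<open>x < y\<close> by (auto simp: le_less)
    then have "cnt_ge V x = cnt_ge V y" "cnt_ge U x = cnt_ge U y + 1"
      using cnt_ge_split[OF assms(2), of x y] cnt_ge_split[OF assms(1), of x y] \<open>x < y\<close> by simp_all
    then show ?thesis
      using bal[of x] bal[of y] by simp
  qed
  then show ?thesis
    using nth_dec_cnt_ge[OF assms(1) x(1)] nth_dec_cnt_ge[OF assms(2) y(1)] x y
    unfolding consec_pair_def singles_def
    by (intro exI[of _ "cnt_ge U x"] exI[of _ "cnt_ge V y"]) auto
qed

section \<open>Moving entries between rows\<close>

definition transfer :: "symbol \<Rightarrow> nat set \<Rightarrow> nat \<Rightarrow> int" where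
  "transfer Y N t = int (card {z\<in>N \<inter> snd Y. t \<le> z}) - int (card {z\<in>N \<inter> fst Y. t \<le> z})"

lemma transfer_empty [simp]: "transfer Y {} t = 0"
  by (simp add: transfer_def)

lemma move_empty [simp]: "move Y {} = Y"
  by (simp add: move_def)

lemma finite_move:
  "finite (fst Y) \<Longrightarrow> finite (snd Y) \<Longrightarrow> finite (fst (move Y N)) \<and> finite (snd (move Y N))"
  by (simp add: move_def)

lemma cnt_ge_move:
  assumes "finite (fst Y)" "finite (snd Y)"
  shows "int (cnt_ge (fst (move Y N)) t) = int (cnt_ge (fst Y) t) + transfer Y N t"
    and "int (cnt_ge (snd (move Y N)) t) = int (cnt_ge (snd Y) t) - transfer Y N t"
proof -
  have split: "card {x\<in>X. t \<le> x} = card {x\<in>X - N. t \<le> x} + card {x\<in>N \<inter> X. t \<le> x}"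
    if "finite X" for X
    using that by (subst card_Un_disjoint[symmetric]) (auto intro: arg_cong[where f = card])
  have "card {x\<in>fst (move Y N). t \<le> x} = card {x\<in>fst Y - N. t \<le> x} + card {x\<in>N \<inter> snd Y. t \<le> x}"
    using assms by (subst card_Un_disjoint[symmetric]) (auto simp: move_def intro: arg_cong[where f = card])
  then show "int (cnt_ge (fst (move Y N)) t) = int (cnt_ge (fst Y) t) + transfer Y N t"
    using split[OF assms(1)] by (simp add: cnt_ge_def transfer_def)
  have "card {x\<in>snd (move Y N). t \<le> x} = card {x\<in>snd Y - N. t \<le> x} + card {x\<in>N \<inter> fst Y. t \<le> x}"
    using assms by (subst card_Un_disjoint[symmetric]) (auto simp: move_def intro: arg_cong[where f = card])
  then show "int (cnt_ge (snd (move Y N)) t) = int (cnt_ge (snd Y) t) - transfer Y N t"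
    using split[OF assms(2)] by (simp add: cnt_ge_def transfer_def)
qed

lemma defect_move:
  "finite (fst Y) \<Longrightarrow> finite (snd Y) \<Longrightarrow> defect (move Y N) = defect Y + 2 * transfer Y N 0"
  using cnt_ge_move[of Y N 0] by (simp add: defect_def)

lemma transfer_split:
  assumes "finite N" "a \<le> b"
  shows "transfer Y N a = transfer Y N b
    + int (card {z\<in>N \<inter> snd Y. a \<le> z \<and> z < b}) - int (card {z\<in>N \<inter> fst Y. a \<le> z \<and> z < b})"
  using cnt_ge_split[of "N \<inter> snd Y" a b] cnt_ge_split[of "N \<inter> fst Y" a b] assms
  by (simp add: transfer_def cnt_ge_def)

lemma transfer_pair:
  assumes "x \<in> fst Y - snd Y" "y \<in> snd Y - fst Y"
  shows "transfer Y {x, y} t = (if t \<le> y then 1 else 0) - (if t \<le> x then 1 else 0)"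
proof -
  have "{z\<in>{x, y} \<inter> snd Y. t \<le> z} = (if t \<le> y then {y} else {})"
    and "{z\<in>{x, y} \<inter> fst Y. t \<le> z} = (if t \<le> x then {x} else {})"
    using assms by auto
  then show ?thesis
    by (simp add: transfer_def)
qed

lemma transfer_window_pair:
  assumes "finite N" "transfer Y N hi = 0"
    and "u \<in> N \<inter> (fst Y - snd Y)" "v \<in> N \<inter> (snd Y - fst Y)" "u < hi" "v < hi"
    and uniq: "\<And>z. z \<in> N \<inter> fst Y \<Longrightarrow> lo \<le> z \<Longrightarrow> z < hi \<Longrightarrow> z = u"
      "\<And>z. z \<in> N \<inter> snd Y \<Longrightarrow> lo \<le> z \<Longrightarrow> z < hi \<Longrightarrow> z = v"
    and "lo \<le> t" "t < hi"
  shows "transfer Y {u, v} t = transfer Y N t"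
proof -
  have "z = u" if "z \<in> N \<inter> fst Y" "t \<le> z" "z < hi" for z
    using uniq(1) that \<open>lo \<le> t\<close> by simp
  moreover have "z = v" if "z \<in> N \<inter> snd Y" "t \<le> z" "z < hi" for z
    using uniq(2) that \<open>lo \<le> t\<close> by simp
  ultimately have "{z\<in>N \<inter> snd Y. t \<le> z \<and> z < hi} = (if t \<le> v then {v} else {})"
    and "{z\<in>N \<inter> fst Y. t \<le> z \<and> z < hi} = (if t \<le> u then {u} else {})"
    using assms(3-6) by auto
  then show ?thesis
    using transfer_split[OF assms(1), of t hi Y] transfer_pair[of u Y v t] assms(2-4) \<open>t < hi\<close> by simp
qed

section \<open>The relation B+ in counting form\<close>

definition interlaced :: "nat \<Rightarrow> nat \<Rightarrow> nat set \<Rightarrow> nat set \<Rightarrow> nat set \<Rightarrow> nat set \<Rightarrow> bool" where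
  "interlaced m m' A B C D \<longleftrightarrow>
     (m' = m \<longrightarrow> (\<forall>t. cnt_ge D t \<le> cnt_ge A (Suc t) \<and> cnt_ge A t \<le> cnt_ge D t + 1 \<and>
                     cnt_ge C t \<le> cnt_ge B (Suc t) + 1 \<and> cnt_ge B t \<le> cnt_ge C t)) \<and>
     (m' = m + 1 \<longrightarrow> (\<forall>t. cnt_ge D t \<le> cnt_ge A t \<and> cnt_ge A t \<le> cnt_ge D (Suc t) + 1 \<and>
                     cnt_ge C t \<le> cnt_ge B t + 1 \<and> cnt_ge B t \<le> cnt_ge C (Suc t)))"

lemma interlaced_iff_ent_equal_ranks:
  assumes "finite A" "finite B" "finite C" "finite D"
    and "m' = m" "card A = m + 1" "card B = m" "card C = m'" "card D = m'"
  shows "interlaced m m' A B C D \<longleftrightarrow>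
    (\<forall>i. 1 \<le> i \<and> i \<le> card D \<longrightarrow> ent D i < ent A i \<and> ent A (i + 1) \<le> ent D i) \<and>
    (\<forall>i. 1 \<le> i \<and> i \<le> card C \<longrightarrow>
       ent C i < (if i = 1 then PInfty else ent B (i - 1)) \<and> ent B i \<le> ent C i)"
  using assms ent_shift_less_iff_cnt_ge[OF assms(1,4), of "card D" 0]
    ent_shift_le_iff_cnt_ge[OF assms(4,1), of "card D" 1] ent_prev_less_iff_cnt_ge[OF assms(2,3)]
    ent_shift_le_iff_cnt_ge[OF assms(3,2), of "card C" 0]
  by (simp only: imp_conjR all_conj_distrib interlaced_def) simp

lemma interlaced_iff_ent_next_rank:
  assumes "finite A" "finite B" "finite C" "finite D"
    and "m' = m + 1" "card A = m + 1" "card B = m" "card C = m'" "card D = m'"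
  shows "interlaced m m' A B C D \<longleftrightarrow>
    (\<forall>i. 1 \<le> i \<and> i \<le> card D \<longrightarrow> ent D i \<le> ent A i \<and> ent A (i + 1) < ent D i) \<and>
    (\<forall>i. 1 \<le> i \<and> i \<le> card C \<longrightarrow>
       ent C i \<le> (if i = 1 then PInfty else ent B (i - 1)) \<and> ent B i < ent C i)"
  using assms ent_shift_le_iff_cnt_ge[OF assms(1,4), of "card D" 0]
    ent_shift_less_iff_cnt_ge[OF assms(4,1), of "card D" 1] ent_prev_le_iff_cnt_ge[OF assms(2,3)]
    ent_shift_less_iff_cnt_ge[OF assms(3,2), of "card C" 0]
  by (simp only: imp_conjR all_conj_distrib interlaced_def) simp

lemma Bplus_iff_interlaced:
  assumes "L \<in> Sbar Z" "L' \<in> Sbar Z'" "card (snd Z) = m" "card (fst Z') = m'" "m' = m \<or> m' = m + 1"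
    and "finite (fst L)" "finite (snd L)" "finite (fst L')" "finite (snd L')"
    and "card (fst L) = m + 1" "card (snd L) = m" "card (fst L') = m'" "card (snd L') = m'"
  shows "(L, L') \<in> Bplus Z Z' \<longleftrightarrow> interlaced m m' (fst L) (snd L) (fst L') (snd L')"
proof -
  obtain A B C D where rows: "L = (A, B)" "L' = (C, D)" by fastforce
  have fin: "finite A" "finite B" "finite C" "finite D"
    and card: "card A = m + 1" "card B = m" "card C = m'" "card D = m'"
    using assms(6-13) by (simp_all add: rows)
  have "(L, L') \<in> Bplus Z Z' \<longleftrightarrow>
     (m' = m \<longrightarrow>
       (\<forall>i. 1 \<le> i \<and> i \<le> card D \<longrightarrow> ent D i < ent A i \<and> ent A (i + 1) \<le> ent D i) \<and>
       (\<forall>i. 1 \<le> i \<and> i \<le> card C \<longrightarrow>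
          ent C i < (if i = 1 then PInfty else ent B (i - 1)) \<and> ent B i \<le> ent C i)) \<and>
     (m' = m + 1 \<longrightarrow>
       (\<forall>i. 1 \<le> i \<and> i \<le> card D \<longrightarrow> ent D i \<le> ent A i \<and> ent A (i + 1) < ent D i) \<and>
       (\<forall>i. 1 \<le> i \<and> i \<le> card C \<longrightarrow>
          ent C i \<le> (if i = 1 then PInfty else ent B (i - 1)) \<and> ent B i < ent C i))"
    using assms(1-4) card unfolding Bplus_def by (simp add: rows defect_def Let_def)
  also have "\<dots> \<longleftrightarrow> interlaced m m' A B C D"
    using assms(5)
  proof
    assume "m' = m"
    then show ?thesis
      using interlaced_iff_ent_equal_ranks[OF fin _ card] by simp
  next
    assume "m' = m + 1"
    then show ?thesis
      using interlaced_iff_ent_next_rank[OF fin _ card] by simp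
  qed
  finally show ?thesis
    by (simp add: rows)
qed

text \<open>For balanced rows, cnt_ge A and cnt_ge B are the upper and lower halves of
  cnt_ge A + cnt_ge B, and each interlacing inequality follows from the one for the sums.\<close>

lemma interlaced_of_balanced_sums:
  assumes bal: "balanced A B" "balanced C D"
    and sums: "\<And>t. cnt_ge A' t + cnt_ge B' t = cnt_ge A t + cnt_ge B t"
      "\<And>t. cnt_ge C' t + cnt_ge D' t = cnt_ge C t + cnt_ge D t"
    and "interlaced m m' A' B' C' D'"
  shows "interlaced m m' A B C D"
proof -
  have rows: "cnt_ge B t \<le> cnt_ge A t" "cnt_ge A t \<le> cnt_ge B t + 1"
    "cnt_ge D t \<le> cnt_ge C t" "cnt_ge C t \<le> cnt_ge D t + 1" for t
    using bal by (simp_all add: balanced_def)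
  show ?thesis
    unfolding interlaced_def
  proof (rule conjI; intro impI allI)
    fix t assume "m' = m"
    then have "cnt_ge D' t \<le> cnt_ge A' (Suc t) \<and> cnt_ge A' t \<le> cnt_ge D' t + 1 \<and>
        cnt_ge C' t \<le> cnt_ge B' (Suc t) + 1 \<and> cnt_ge B' t \<le> cnt_ge C' t"
      using assms(5) by (simp add: interlaced_def)
    then show "cnt_ge D t \<le> cnt_ge A (Suc t) \<and> cnt_ge A t \<le> cnt_ge D t + 1 \<and>
        cnt_ge C t \<le> cnt_ge B (Suc t) + 1 \<and> cnt_ge B t \<le> cnt_ge C t"
      using rows[of t] rows[of "Suc t"] sums[of t] sums[of "Suc t"] by (intro conjI; linarith)
  next
    fix t assume "m' = m + 1"
    then have "cnt_ge D' t \<le> cnt_ge A' t \<and> cnt_ge A' t \<le> cnt_ge D' (Suc t) + 1 \<and>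
        cnt_ge C' t \<le> cnt_ge B' t + 1 \<and> cnt_ge B' t \<le> cnt_ge C' (Suc t)"
      using assms(5) by (simp add: interlaced_def)
    then show "cnt_ge D t \<le> cnt_ge A t \<and> cnt_ge A t \<le> cnt_ge D (Suc t) + 1 \<and>
        cnt_ge C t \<le> cnt_ge B t + 1 \<and> cnt_ge B t \<le> cnt_ge C (Suc t)"
      using rows[of t] rows[of "Suc t"] sums[of t] sums[of "Suc t"] by (intro conjI; linarith)
  qed
qed

lemma DZZ_move_iff:
  assumes Z: "special1 m Z" and Z': "special0 m' Z'" and mm: "m' = m \<or> m' = m + 1"
    and M: "M \<subseteq> singles Z" and N: "N \<subseteq> singles Z'"
  shows "(move Z M, move Z' N) \<in> DZZ Z Z' \<longleftrightarrow> transfer Z M 0 = 0 \<and> transfer Z' N 0 = 0 \<and>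
    interlaced m m' (fst (move Z M)) (snd (move Z M)) (fst (move Z' N)) (snd (move Z' N))"
proof -
  have fin: "finite (fst Z)" "finite (snd Z)" "finite (fst Z')" "finite (snd Z')"
    and card: "card (fst Z) = m + 1" "card (snd Z) = m" "card (fst Z') = m'" "card (snd Z') = m'"
    using Z Z' by (auto simp: special1_def special0_def is_symbol_def)
  have Sbar: "move Z M \<in> Sbar Z" "move Z' N \<in> Sbar Z'"
    using M N by (auto simp: Sbar_def)
  have defects: "defect (move Z M) = 1 + 2 * transfer Z M 0" "defect (move Z' N) = 2 * transfer Z' N 0"
    using defect_move[OF fin(1,2), of M] defect_move[OF fin(3,4), of N] card by (simp_all add: defect_def)
  show ?thesis
  proof (cases "transfer Z M 0 = 0 \<and> transfer Z' N 0 = 0")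
    case True
    then have "card (fst (move Z M)) = m + 1" "card (snd (move Z M)) = m"
      "card (fst (move Z' N)) = m'" "card (snd (move Z' N)) = m'"
      using cnt_ge_move[OF fin(1,2), of M 0] cnt_ge_move[OF fin(3,4), of N 0] card by simp_all
    then show ?thesis
      using True Sbar defects Bplus_iff_interlaced[OF Sbar card(2,3) mm] finite_move[OF fin(1,2)] finite_move[OF fin(3,4)]
      by (simp add: DZZ_def Sdef_def)
  qed (use defects in \<open>auto simp: DZZ_def Sdef_def\<close>)
qed

lemma DZZ_special_pair:
  assumes Z: "special1 m Z" and Z': "special0 m' Z'" and mm: "m' = m \<or> m' = m + 1"
    and "DZZ Z Z' \<noteq> {}"
  shows "(Z, Z') \<in> DZZ Z Z'"
proof -
  have fin: "finite (fst Z)" "finite (snd Z)" "finite (fst Z')" "finite (snd Z')"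
    using Z Z' by (auto simp: special1_def special0_def is_symbol_def)
  obtain L L' where "(L, L') \<in> DZZ Z Z'"
    using assms(4) by auto
  then obtain M N where M: "M \<subseteq> singles Z" "L = move Z M" and N: "N \<subseteq> singles Z'" "L' = move Z' N"
    by (auto simp: DZZ_def Sdef_def Sbar_def)
  then have "interlaced m m' (fst (move Z M)) (snd (move Z M)) (fst (move Z' N)) (snd (move Z' N))"
    using DZZ_move_iff[OF Z Z' mm M(1) N(1)] \<open>(L, L') \<in> DZZ Z Z'\<close> by simp
  moreover have "cnt_ge (fst (move Z M)) t + cnt_ge (snd (move Z M)) t = cnt_ge (fst Z) t + cnt_ge (snd Z) t"
    and "cnt_ge (fst (move Z' N)) t + cnt_ge (snd (move Z' N)) t = cnt_ge (fst Z') t + cnt_ge (snd Z') t" for t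
    using cnt_ge_move[OF fin(1,2), of M t] cnt_ge_move[OF fin(3,4), of N t] by linarith+
  ultimately have "interlaced m m' (fst Z) (snd Z) (fst Z') (snd Z')"
    using interlaced_of_balanced_sums[OF special1_balanced[OF Z] special0_balanced[OF Z']] by blast
  then show ?thesis
    using DZZ_move_iff[OF Z Z' mm, of "{}" "{}"] by simp
qed

definition in_bands :: "(nat \<Rightarrow> int) \<Rightarrow> (nat \<Rightarrow> int) \<Rightarrow> nat set \<Rightarrow> nat set \<Rightarrow> nat \<Rightarrow> bool" where
  "in_bands g h U V t \<longleftrightarrow> g t \<le> int (cnt_ge U t) \<and> int (cnt_ge U t) \<le> g (Suc t) + 1 \<and>
                          h t \<le> int (cnt_ge V t) \<and> int (cnt_ge V t) \<le> h (Suc t) + 1"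

lemma interlaced_iff_in_bands_right:
  assumes "m' = m \<or> m' = m + 1" "finite C" "finite D"
  shows "interlaced m m' A B C D \<longleftrightarrow>
    (\<forall>t. in_bands (\<lambda>t. int (cnt_ge B (t - (m' - m)))) (\<lambda>t. int (cnt_ge A (t - (m' - m))) - 1) C D t)"
  using assms(1)
proof
  assume "m' = m"
  then have "in_bands (\<lambda>t. int (cnt_ge B (t - (m' - m)))) (\<lambda>t. int (cnt_ge A (t - (m' - m))) - 1) C D t
      \<longleftrightarrow> cnt_ge D t \<le> cnt_ge A (Suc t) \<and> cnt_ge A t \<le> cnt_ge D t + 1 \<and>
         cnt_ge C t \<le> cnt_ge B (Suc t) + 1 \<and> cnt_ge B t \<le> cnt_ge C t" for t
    by (auto simp: in_bands_def)
  then show ?thesis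
    using \<open>m' = m\<close> by (simp add: interlaced_def)
next
  assume "m' = m + 1"
  then have "in_bands (\<lambda>t. int (cnt_ge B (t - (m' - m)))) (\<lambda>t. int (cnt_ge A (t - (m' - m))) - 1) C D t
      \<longleftrightarrow> cnt_ge D t \<le> cnt_ge A t \<and> cnt_ge A (t - 1) \<le> cnt_ge D t + 1 \<and>
         cnt_ge C t \<le> cnt_ge B t + 1 \<and> cnt_ge B (t - 1) \<le> cnt_ge C t + 0" for t
    by (auto simp: in_bands_def)
  then show ?thesis
    using \<open>m' = m + 1\<close> all_cnt_ge_diff1_le_iff[OF assms(2), of B 0] all_cnt_ge_diff1_le_iff[OF assms(3), of A 1]
    by (simp add: interlaced_def all_conj_distrib)
qed

lemma interlaced_iff_in_bands_left:
  assumes "m' = m \<or> m' = m + 1" "finite A" "finite B"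
  shows "interlaced m m' A B C D \<longleftrightarrow>
    (\<forall>t. in_bands (\<lambda>t. int (cnt_ge D (t - (Suc m - m')))) (\<lambda>t. int (cnt_ge C (t - (Suc m - m'))) - 1) A B t)"
  using assms(1)
proof
  assume "m' = m"
  then have "in_bands (\<lambda>t. int (cnt_ge D (t - (Suc m - m')))) (\<lambda>t. int (cnt_ge C (t - (Suc m - m'))) - 1) A B t
      \<longleftrightarrow> cnt_ge D (t - 1) \<le> cnt_ge A t + 0 \<and> cnt_ge A t \<le> cnt_ge D t + 1 \<and>
         cnt_ge C (t - 1) \<le> cnt_ge B t + 1 \<and> cnt_ge B t \<le> cnt_ge C t" for t
    by (auto simp: in_bands_def)
  then show ?thesis
    using \<open>m' = m\<close> all_cnt_ge_diff1_le_iff[OF assms(2), of D 0] all_cnt_ge_diff1_le_iff[OF assms(3), of C 1]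
    by (simp add: interlaced_def all_conj_distrib)
next
  assume "m' = m + 1"
  then have "in_bands (\<lambda>t. int (cnt_ge D (t - (Suc m - m')))) (\<lambda>t. int (cnt_ge C (t - (Suc m - m'))) - 1) A B t
      \<longleftrightarrow> cnt_ge D t \<le> cnt_ge A t \<and> cnt_ge A t \<le> cnt_ge D (Suc t) + 1 \<and>
         cnt_ge C t \<le> cnt_ge B t + 1 \<and> cnt_ge B t \<le> cnt_ge C (Suc t)" for t
    by (auto simp: in_bands_def)
  then show ?thesis
    using \<open>m' = m + 1\<close> by (simp add: interlaced_def)
qed

section \<open>Admissible moves within bands\<close>

text \<open>U and V are the rows of the symbol whose entries are moved; g and h are the lower edges
  of the bands, which in the application come from the rows of the other, fixed symbol.\<close>

locale count_bands =
  fixes U V :: "nat set" and g h :: "nat \<Rightarrow> int"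
  assumes finite_U: "finite U" and finite_V: "finite V" and balanced: "balanced U V"
    and g_step: "\<And>t. g (Suc t) \<le> g t \<and> g t \<le> g (Suc t) + 1"
    and h_step: "\<And>t. h (Suc t) \<le> h t \<and> h t \<le> h (Suc t) + 1"
    and rows_in_bands: "\<And>t. in_bands g h U V t"
begin

definition admissible_at :: "int \<Rightarrow> nat \<Rightarrow> bool" where
  "admissible_at s t \<longleftrightarrow> g t \<le> int (cnt_ge U t) + s \<and> int (cnt_ge U t) + s \<le> g (Suc t) + 1 \<and>
                          h t \<le> int (cnt_ge V t) - s \<and> int (cnt_ge V t) - s \<le> h (Suc t) + 1"

definition admissible :: "nat set \<Rightarrow> bool" where
  "admissible N \<longleftrightarrow> N \<subseteq> singles (U, V) \<and> transfer (U, V) N 0 = 0 \<and>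
                     (\<forall>t. admissible_at (transfer (U, V) N t) t)"

text \<open>At a barrier one of the two bands degenerates to a single value.\<close>

definition barrier :: "nat \<Rightarrow> bool" where
  "barrier b \<longleftrightarrow> g b = g (Suc b) + 1 \<or> h b = h (Suc b) + 1"

definition barrier_free :: "nat \<Rightarrow> nat \<Rightarrow> bool" where
  "barrier_free a c \<longleftrightarrow> (\<forall>b. a < b \<and> b \<le> c \<longrightarrow> \<not> barrier b)"

definition adjacent_pair :: "nat set \<Rightarrow> bool" where
  "adjacent_pair P \<longleftrightarrow> (\<exists>x y. P = {x, y} \<and> x \<in> U - V \<and> y \<in> V - U \<and>
                          (\<forall>z\<in>U \<union> V. \<not> (min x y < z \<and> z < max x y)))"

definition admissible_pairs :: "nat set set" where
  "admissible_pairs = {P. adjacent_pair P \<and> admissible P}"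

lemma admissible_at_transfer_iff:
  "admissible_at (transfer (U, V) N t) t \<longleftrightarrow> in_bands g h (fst (move (U, V) N)) (snd (move (U, V) N)) t"
  using cnt_ge_move[of "(U, V)" N t] finite_U finite_V by (simp add: admissible_at_def in_bands_def)

lemma admissible_at_0: "admissible_at 0 t"
  using rows_in_bands[of t] by (simp add: admissible_at_def in_bands_def)

lemma transfer_eq_0_at_barrier:
  assumes "admissible N" "barrier b"
  shows "transfer (U, V) N b = 0"
proof -
  have "admissible_at (transfer (U, V) N b) b"
    using assms(1) by (simp add: admissible_def)
  then show ?thesis
    using assms(2) admissible_at_0[of b] unfolding admissible_at_def barrier_def by linarith
qed

lemma bands_constant:
  assumes "barrier_free a c" "a \<le> n" "n \<le> c"
  shows "g (Suc n) = g (Suc a) \<and> h (Suc n) = h (Suc a)"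
  using assms(2,3)
proof (induction n rule: dec_induct)
  case (step n)
  then have "\<not> barrier (Suc n)"
    using assms(1) by (simp add: barrier_free_def)
  then show ?case
    using step g_step[of "Suc n"] h_step[of "Suc n"] unfolding barrier_def by fastforce
qed simp

lemma barrier_free_unique:
  assumes "barrier_free a c" "a \<le> x" "x \<le> c" "a \<le> x'" "x' \<le> c"
  shows "x \<in> U \<Longrightarrow> x' \<in> U \<Longrightarrow> x = x'" and "x \<in> V \<Longrightarrow> x' \<in> V \<Longrightarrow> x = x'"
proof -
  have "a \<le> c" using assms by simp
  have "g (Suc c) = g (Suc a)" "h (Suc c) = h (Suc a)"
    using bands_constant[OF assms(1) \<open>a \<le> c\<close> order_refl] by simp_all
  then have "cnt_ge U a \<le> cnt_ge U (Suc c) + 1" "cnt_ge V a \<le> cnt_ge V (Suc c) + 1"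
    using rows_in_bands[of a] rows_in_bands[of "Suc c"] unfolding in_bands_def by linarith+
  then have "card {z\<in>U. a \<le> z \<and> z < Suc c} \<le> 1" "card {z\<in>V. a \<le> z \<and> z < Suc c} \<le> 1"
    using cnt_ge_split[OF finite_U, of a "Suc c"] cnt_ge_split[OF finite_V, of a "Suc c"] \<open>a \<le> c\<close>
    by simp_all
  then show "x \<in> U \<Longrightarrow> x' \<in> U \<Longrightarrow> x = x'" and "x \<in> V \<Longrightarrow> x' \<in> V \<Longrightarrow> x = x'"
    using assms(2-5) finite_U finite_V by (auto simp: card_le_Suc0_iff_eq)
qed

lemma admissible_pair_barrier_free:
  assumes "admissible {x, y}" "x \<in> U - V" "y \<in> V - U"
  shows "barrier_free (min x y) (max x y)"
  unfolding barrier_free_def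
proof (intro allI impI notI)
  fix b assume "min x y < b \<and> b \<le> max x y" "barrier b"
  then show False
    using transfer_eq_0_at_barrier[OF assms(1)] transfer_pair[of x "(U, V)" y b] assms(2,3)
    by (auto simp: min_def max_def split: if_splits)
qed

lemma barrier_free_Un:
  assumes "barrier_free a c" "barrier_free a' c'" "a \<le> p" "p \<le> c" "a' \<le> p" "p \<le> c'"
  shows "barrier_free (min a a') (max c c')"
  unfolding barrier_free_def
proof (intro allI impI)
  fix b assume "min a a' < b \<and> b \<le> max c c'"
  then have "(a < b \<and> b \<le> c) \<or> (a' < b \<and> b \<le> c')"
    using assms(3-6) by (auto simp: min_less_iff_disj le_max_iff_disj)
  then show "\<not> barrier b"
    using assms(1,2) unfolding barrier_free_def by blast
qed

lemma admissible_pairsE: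
  assumes "P \<in> admissible_pairs"
  obtains x y where "P = {x, y}" "x \<in> U - V" "y \<in> V - U" "admissible {x, y}"
    "\<forall>z\<in>U \<union> V. \<not> (min x y < z \<and> z < max x y)"
  using assms unfolding admissible_pairs_def adjacent_pair_def by blast

text \<open>Overlapping spans of admissible pairs give a barrier-free interval, in which each row
  has at most one entry.\<close>

lemma admissible_pairs_eq_if_spans_meet:
  assumes "P \<in> admissible_pairs" "Q \<in> admissible_pairs"
    and "\<exists>x\<in>P. x \<le> p" "\<exists>y\<in>P. p \<le> y" "\<exists>x\<in>Q. x \<le> p" "\<exists>y\<in>Q. p \<le> y"
  shows "P = Q"
proof -
  obtain x y where P: "P = {x, y}" "x \<in> U - V" "y \<in> V - U" "admissible {x, y}"
    using assms(1) by (rule admissible_pairsE)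
  obtain x' y' where Q: "Q = {x', y'}" "x' \<in> U - V" "y' \<in> V - U" "admissible {x', y'}"
    using assms(2) by (rule admissible_pairsE)
  have p: "min x y \<le> p" "p \<le> max x y" "min x' y' \<le> p" "p \<le> max x' y'"
    using assms(3-6) P(1) Q(1) by auto
  have "barrier_free (min (min x y) (min x' y')) (max (max x y) (max x' y'))"
    using barrier_free_Un[OF admissible_pair_barrier_free[OF P(4,2,3)]
        admissible_pair_barrier_free[OF Q(4,2,3)] p] .
  then have "x = x'" "y = y'"
    using barrier_free_unique[of _ _ x x'] barrier_free_unique[of _ _ y y'] P(2,3) Q(2,3)
    by (simp_all add: min_le_iff_disj le_max_iff_disj)
  then show ?thesis
    using P(1) Q(1) by simp
qed

lemma admissible_pairs_disjoint:
  assumes "P \<in> admissible_pairs" "Q \<in> admissible_pairs" "P \<inter> Q \<noteq> {}"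
  shows "P = Q"
proof -
  obtain z where "z \<in> P" "z \<in> Q"
    using assms(3) by blast
  then show ?thesis
    by (intro admissible_pairs_eq_if_spans_meet[OF assms(1,2), of z]) auto
qed

lemma admissible_pairs_transfer_unique:
  assumes "P \<in> admissible_pairs" "Q \<in> admissible_pairs"
    and "transfer (U, V) P t \<noteq> 0" "transfer (U, V) Q t \<noteq> 0"
  shows "P = Q"
proof (rule admissible_pairs_eq_if_spans_meet[OF assms(1,2)])
  have "\<exists>x\<in>R. x \<le> t" "\<exists>y\<in>R. t \<le> y" if "R \<in> admissible_pairs" "transfer (U, V) R t \<noteq> 0" for R
    using that by (elim admissible_pairsE; auto simp: transfer_pair split: if_splits)+
  then show "\<exists>x\<in>P. x \<le> t" "\<exists>y\<in>P. t \<le> y" "\<exists>x\<in>Q. x \<le> t" "\<exists>y\<in>Q. t \<le> y"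
    using assms by blast+
qed

lemma barrier_window:
  assumes "x < M"
  obtains lo hi where "lo \<le> x" "x < hi" "hi \<le> M" "lo = 0 \<or> barrier lo" "hi = M \<or> barrier hi"
    "barrier_free lo (hi - 1)"
proof -
  define lo where "lo = Max (insert 0 {b. b \<le> x \<and> barrier b})"
  define hi where "hi = Min (insert M {b. x < b \<and> b \<le> M \<and> barrier b})"
  have fin: "finite {b. b \<le> x \<and> barrier b}" "finite {b. x < b \<and> b \<le> M \<and> barrier b}"
    by (auto intro: finite_subset[of _ "{..x}"] finite_subset[of _ "{..M}"])
  have "lo \<in> insert 0 {b. b \<le> x \<and> barrier b}" "hi \<in> insert M {b. x < b \<and> b \<le> M \<and> barrier b}"
    unfolding lo_def hi_def using fin by (intro Max_in Min_in; simp)+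
  then have "lo \<le> x" "x < hi" "hi \<le> M" "lo = 0 \<or> barrier lo" "hi = M \<or> barrier hi"
    using assms by auto
  moreover have "barrier_free lo (hi - 1)"
    unfolding barrier_free_def
  proof (intro allI impI notI)
    fix b assume b: "lo < b \<and> b \<le> hi - 1" "barrier b"
    show False
    proof (cases "b \<le> x")
      case True
      then have "b \<le> lo" unfolding lo_def using fin b by (intro Max_ge) auto
      then show False using b by simp
    next
      case False
      then have "hi \<le> b" unfolding hi_def using fin b \<open>hi \<le> M\<close> by (intro Min_le) auto
      then show False using b \<open>x < hi\<close> by linarith
    qed
  qed
  ultimately show ?thesis
    by (rule that)
qed

lemma window_pair:
  assumes N: "admissible N" "x \<in> N"
    and window: "lo \<le> x" "x < hi" "transfer (U, V) N lo = 0" "transfer (U, V) N hi = 0"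
      "barrier_free lo (hi - 1)"
  obtains u v where "u \<in> N \<inter> (U - V)" "v \<in> N \<inter> (V - U)" "x \<in> {u, v}"
    "lo \<le> u" "u < hi" "lo \<le> v" "v < hi"
    "\<And>z. z \<in> U \<Longrightarrow> lo \<le> z \<Longrightarrow> z < hi \<Longrightarrow> z = u"
    "\<And>z. z \<in> V \<Longrightarrow> lo \<le> z \<Longrightarrow> z < hi \<Longrightarrow> z = v"
proof -
  have "N \<subseteq> singles (U, V)"
    using N(1) by (simp add: admissible_def)
  then have N_rows: "N \<subseteq> (U - V) \<union> (V - U)" and "finite N"
    using finite_U finite_V by (auto simp: singles_def intro: finite_subset)
  define NU where "NU = {z\<in>N \<inter> U. lo \<le> z \<and> z < hi}"
  define NV where "NV = {z\<in>N \<inter> V. lo \<le> z \<and> z < hi}"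
  have "card NV = card NU"
    using transfer_split[OF \<open>finite N\<close>, of lo hi "(U, V)"] window(1-4)
    by (simp add: NU_def NV_def)
  moreover have "x \<in> NU \<union> NV" "finite NU" "finite NV"
    using N(2) N_rows window(1,2) \<open>finite N\<close> by (auto simp: NU_def NV_def)
  ultimately obtain u v where "u \<in> NU" "v \<in> NV"
    by (metis UnE card_0_eq equals0I)
  then have u: "u \<in> N \<inter> (U - V)" "lo \<le> u" "u < hi" and v: "v \<in> N \<inter> (V - U)" "lo \<le> v" "v < hi"
    using N_rows by (auto simp: NU_def NV_def)
  have unique: "z = u" if "z \<in> U" "lo \<le> z" "z < hi" for z
    using barrier_free_unique(1)[OF window(5), of z u] that u by simp
  have unique': "z = v" if "z \<in> V" "lo \<le> z" "z < hi" for z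
    using barrier_free_unique(2)[OF window(5), of z v] that v by simp
  have "x \<in> {u, v}"
    using N(2) N_rows window(1,2) unique unique' by blast
  then show ?thesis
    using that[OF u(1) v(1) _ u(2,3) v(2,3) unique unique'] by blast
qed

lemma window_pair_admissible:
  assumes N: "admissible N" "transfer (U, V) N hi = 0"
    and uv: "u \<in> N \<inter> (U - V)" "v \<in> N \<inter> (V - U)" "lo \<le> u" "u < hi" "lo \<le> v" "v < hi"
    and unique: "\<And>z. z \<in> U \<Longrightarrow> lo \<le> z \<Longrightarrow> z < hi \<Longrightarrow> z = u"
      "\<And>z. z \<in> V \<Longrightarrow> lo \<le> z \<Longrightarrow> z < hi \<Longrightarrow> z = v"
  shows "{u, v} \<in> admissible_pairs"
proof -
  have "finite N"
    using N(1) finite_U finite_V by (auto simp: admissible_def singles_def intro: finite_subset)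
  have pair: "transfer (U, V) {u, v} t = (if t \<le> v then 1 else 0) - (if t \<le> u then 1 else 0)" for t
    using uv by (intro transfer_pair) auto
  have "transfer (U, V) {u, v} t = transfer (U, V) N t" if "lo \<le> t" "t < hi" for t
    by (rule transfer_window_pair[OF \<open>finite N\<close> N(2)]) (use uv unique that in auto)
  moreover have "transfer (U, V) {u, v} t = 0" if "t < lo \<or> hi \<le> t" for t
    using that uv pair by auto
  ultimately have "admissible_at (transfer (U, V) {u, v} t) t" for t
    using N(1) admissible_at_0 unfolding admissible_def by (metis not_le)
  then have "admissible {u, v}"
    using uv pair[of 0] N(1) by (auto simp: admissible_def singles_def)
  moreover have "\<forall>z\<in>U \<union> V. \<not> (min u v < z \<and> z < max u v)"
  proof (intro ballI notI)
    fix z assume "z \<in> U \<union> V" "min u v < z \<and> z < max u v"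
    moreover from this have "lo \<le> z" "z < hi" "z \<noteq> u" "z \<noteq> v"
      using uv by (auto simp: min_def max_def split: if_splits)
    ultimately show False
      using unique by blast
  qed
  ultimately show ?thesis
    using uv unfolding admissible_pairs_def adjacent_pair_def by blast
qed

lemma admissible_pairs_cover:
  assumes "admissible N" "x \<in> N"
  shows "\<exists>P\<in>admissible_pairs. x \<in> P \<and> P \<subseteq> N"
proof -
  have N_rows: "N \<subseteq> U \<union> V"
    using assms(1) by (auto simp: admissible_def singles_def)
  define M where "M = Suc (Max (U \<union> V))"
  have beyond: "z < M" if "z \<in> U \<union> V" for z
    using that finite_U finite_V by (simp add: M_def le_imp_less_Suc)
  have "x < M"
    using beyond N_rows assms(2) by blast
  then obtain lo hi where window: "lo \<le> x" "x < hi" "hi \<le> M" "lo = 0 \<or> barrier lo"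
    "hi = M \<or> barrier hi" "barrier_free lo (hi - 1)"
    by (rule barrier_window)
  have "{z\<in>N \<inter> snd (U, V). M \<le> z} = {}" "{z\<in>N \<inter> fst (U, V). M \<le> z} = {}"
    using beyond by (auto simp: not_le[symmetric])
  then have "transfer (U, V) N M = 0"
    unfolding transfer_def by (simp only:)
  moreover have "transfer (U, V) N 0 = 0"
    using assms(1) by (simp add: admissible_def)
  ultimately have zero: "transfer (U, V) N lo = 0" "transfer (U, V) N hi = 0"
    using window(4,5) transfer_eq_0_at_barrier[OF assms(1)] by auto
  show ?thesis
  proof (rule window_pair[OF assms window(1,2) zero window(6)])
    fix u v
    assume uv: "u \<in> N \<inter> (U - V)" "v \<in> N \<inter> (V - U)" and "x \<in> {u, v}"
      and window_uv: "lo \<le> u" "u < hi" "lo \<le> v" "v < hi"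
        "\<And>z. z \<in> U \<Longrightarrow> lo \<le> z \<Longrightarrow> z < hi \<Longrightarrow> z = u"
        "\<And>z. z \<in> V \<Longrightarrow> lo \<le> z \<Longrightarrow> z < hi \<Longrightarrow> z = v"
    have "{u, v} \<in> admissible_pairs"
      by (rule window_pair_admissible[OF assms(1) zero(2) uv window_uv])
    moreover have "{u, v} \<subseteq> N"
      using uv by simp
    ultimately show ?thesis
      using \<open>x \<in> {u, v}\<close> by (intro bexI[of _ "{u, v}"]) simp_all
  qed
qed

lemma finite_admissible_pairs: "finite admissible_pairs"
proof -
  have "admissible_pairs \<subseteq> Pow (U \<union> V)"
    by (auto simp: admissible_pairs_def adjacent_pair_def)
  then show ?thesis
    using finite_U finite_V finite_subset by blast
qed

lemma transfer_Union:
  assumes "S \<subseteq> admissible_pairs"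
  shows "transfer (U, V) (\<Union>S) t = (\<Sum>P\<in>S. transfer (U, V) P t)"
proof -
  have "finite S"
    using assms finite_admissible_pairs finite_subset by blast
  have "card {z\<in>\<Union>S \<inter> W. t \<le> z} = (\<Sum>P\<in>S. card {z\<in>P \<inter> W. t \<le> z})" for W
  proof -
    have "{z\<in>\<Union>S \<inter> W. t \<le> z} = (\<Union>P\<in>S. {z\<in>P \<inter> W. t \<le> z})"
      by auto
    also have "card \<dots> = (\<Sum>P\<in>S. card {z\<in>P \<inter> W. t \<le> z})"
    proof (rule card_UN_disjoint[OF \<open>finite S\<close>])
      show "\<forall>P\<in>S. finite {z\<in>P \<inter> W. t \<le> z}"
        using assms by (auto simp: admissible_pairs_def adjacent_pair_def)
      show "\<forall>P\<in>S. \<forall>Q\<in>S. P \<noteq> Q \<longrightarrow> {z\<in>P \<inter> W. t \<le> z} \<inter> {z\<in>Q \<inter> W. t \<le> z} = {}"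
        using assms admissible_pairs_disjoint by blast
    qed
    finally show ?thesis .
  qed
  then show ?thesis
    by (simp add: transfer_def sum_subtractf)
qed

lemma admissible_Union:
  assumes "S \<subseteq> admissible_pairs"
  shows "admissible (\<Union>S)"
  unfolding admissible_def
proof (intro conjI allI)
  have pairs: "admissible P" if "P \<in> S" for P
    using that assms by (auto simp: admissible_pairs_def)
  then show "\<Union>S \<subseteq> singles (U, V)" and "transfer (U, V) (\<Union>S) 0 = 0"
    by (auto simp: admissible_def transfer_Union[OF assms])
  have "finite S"
    using assms finite_admissible_pairs finite_subset by blast
  fix t
  show "admissible_at (transfer (U, V) (\<Union>S) t) t"
  proof (cases "\<exists>P\<in>S. transfer (U, V) P t \<noteq> 0")
    case True
    then obtain P where P: "P \<in> S" "transfer (U, V) P t \<noteq> 0" by blast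
    then have "transfer (U, V) Q t = 0" if "Q \<in> S - {P}" for Q
      using that assms admissible_pairs_transfer_unique by blast
    then have "transfer (U, V) (\<Union>S) t = transfer (U, V) P t"
      using sum.remove[OF \<open>finite S\<close> P(1), of "\<lambda>Q. transfer (U, V) Q t"]
      by (simp add: transfer_Union[OF assms])
    then show ?thesis
      using pairs[OF P(1)] by (simp add: admissible_def)
  qed (simp add: transfer_Union[OF assms] admissible_at_0)
qed

lemma admissible_iff_Union: "admissible N \<longleftrightarrow> (\<exists>S\<subseteq>admissible_pairs. N = \<Union>S)"
proof
  assume "admissible N"
  have "N = \<Union>{P\<in>admissible_pairs. P \<subseteq> N}"
  proof (intro equalityI subsetI)
    fix x assume "x \<in> N"
    then obtain P where "P \<in> admissible_pairs" "x \<in> P" "P \<subseteq> N"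
      using admissible_pairs_cover[OF \<open>admissible N\<close>] by blast
    then show "x \<in> \<Union>{P\<in>admissible_pairs. P \<subseteq> N}"
      by blast
  qed blast
  then show "\<exists>S\<subseteq>admissible_pairs. N = \<Union>S"
    by (intro exI[of _ "{P\<in>admissible_pairs. P \<subseteq> N}"]) simp
next
  assume "\<exists>S\<subseteq>admissible_pairs. N = \<Union>S"
  then obtain S where "S \<subseteq> admissible_pairs" "N = \<Union>S"
    by blast
  then show "admissible N"
    by (simp add: admissible_Union)
qed

lemma admissible_iff_in_bands:
  "admissible N \<longleftrightarrow> N \<subseteq> singles (U, V) \<and> transfer (U, V) N 0 = 0 \<and>
     (\<forall>t. in_bands g h (fst (move (U, V) N)) (snd (move (U, V) N)) t)"
  by (simp add: admissible_def admissible_at_transfer_iff)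

lemma moves_eq_Union_consec_pairs:
  "\<exists>\<Psi>0. (\<forall>P\<in>\<Psi>0. consec_pair (U, V) P) \<and> pairwise disjnt \<Psi>0 \<and>
     move (U, V) ` {N. admissible N} = {move (U, V) (\<Union>\<Psi>) | \<Psi>. \<Psi> \<subseteq> \<Psi>0}"
proof (intro exI conjI)
  show "\<forall>P\<in>admissible_pairs. consec_pair (U, V) P"
    using consec_pair_if_adjacent[OF finite_U finite_V balanced]
    by (auto simp: admissible_pairs_def adjacent_pair_def)
  show "pairwise disjnt admissible_pairs"
    using admissible_pairs_disjoint by (auto simp: pairwise_def disjnt_def)
  show "move (U, V) ` {N. admissible N} = {move (U, V) (\<Union>\<Psi>) | \<Psi>. \<Psi> \<subseteq> admissible_pairs}"
    by (auto simp: admissible_iff_Union)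
qed

end

lemma DZZ_right_section:
  assumes "\<And>N. N \<subseteq> singles Z' \<Longrightarrow> (Z, move Z' N) \<in> DZZ Z Z' \<longleftrightarrow> P N"
    and "\<And>N. P N \<Longrightarrow> N \<subseteq> singles Z'"
  shows "{L'. (Z, L') \<in> DZZ Z Z'} = move Z' ` {N. P N}"
proof (intro set_eqI iffI)
  fix L' assume "L' \<in> {L'. (Z, L') \<in> DZZ Z Z'}"
  moreover from this obtain N where "N \<subseteq> singles Z'" "L' = move Z' N"
    by (auto simp: DZZ_def Sdef_def Sbar_def)
  ultimately show "L' \<in> move Z' ` {N. P N}"
    using assms(1) by auto
qed (use assms in auto)

lemma DZZ_left_section:
  assumes "\<And>M. M \<subseteq> singles Z \<Longrightarrow> (move Z M, Z') \<in> DZZ Z Z' \<longleftrightarrow> P M"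
    and "\<And>M. P M \<Longrightarrow> M \<subseteq> singles Z"
  shows "{L. (L, Z') \<in> DZZ Z Z'} = move Z ` {M. P M}"
proof (intro set_eqI iffI)
  fix L assume "L \<in> {L. (L, Z') \<in> DZZ Z Z'}"
  moreover from this obtain M where "M \<subseteq> singles Z" "L = move Z M"
    by (auto simp: DZZ_def Sdef_def Sbar_def)
  ultimately show "L \<in> move Z ` {M. P M}"
    using assms(1) by auto
qed (use assms in auto)

text \<open>The offsets m' - m here and Suc m - m' in the next lemma are 0 or 1; they shift the bands
  by one step in one of the two cases m' = m and m' = m + 1.\<close>

lemma DZZ_right_factor:
  assumes Z: "special1 m Z" and Z': "special0 m' Z'" and mm: "m' = m \<or> m' = m + 1"
    and ZZ': "(Z, Z') \<in> DZZ Z Z'"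
  shows "\<exists>\<Psi>0'. (\<forall>P\<in>\<Psi>0'. consec_pair Z' P) \<and> pairwise disjnt \<Psi>0' \<and>
           {L'. (Z, L') \<in> DZZ Z Z'} = {move Z' (\<Union>\<Psi>') | \<Psi>'. \<Psi>' \<subseteq> \<Psi>0'}"
proof -
  obtain A B C D where rows: "Z = (A, B)" "Z' = (C, D)" by fastforce
  have fin: "finite A" "finite B" "finite C" "finite D"
    using Z Z' by (auto simp: rows special1_def special0_def is_symbol_def)
  define g where "g = (\<lambda>t. int (cnt_ge B (t - (m' - m))))"
  define h where "h = (\<lambda>t. int (cnt_ge A (t - (m' - m))) - 1)"
  have bands: "interlaced m m' A B (fst (move Z' N)) (snd (move Z' N)) \<longleftrightarrow>
      (\<forall>t. in_bands g h (fst (move Z' N)) (snd (move Z' N)) t)" for N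
    unfolding g_def h_def using finite_move[of Z' N] fin
    by (intro interlaced_iff_in_bands_right[OF mm]) (simp_all add: rows)
  have DZZ_iff: "(Z, move Z' N) \<in> DZZ Z Z' \<longleftrightarrow> transfer Z' N 0 = 0 \<and>
      (\<forall>t. in_bands g h (fst (move Z' N)) (snd (move Z' N)) t)" if "N \<subseteq> singles Z'" for N
    using DZZ_move_iff[OF Z Z' mm empty_subsetI that] bands by (simp add: rows)
  interpret count_bands C D g h
  proof
    show "finite C" "finite D" by (fact fin)+
    show "balanced C D" using special0_balanced[OF Z'] by (simp add: rows)
    show "g (Suc t) \<le> g t \<and> g t \<le> g (Suc t) + 1" "h (Suc t) \<le> h t \<and> h t \<le> h (Suc t) + 1" for t
      using cnt_ge_Suc_diff_le[OF fin(1), of t "m' - m"] cnt_ge_Suc_diff_le[OF fin(2), of t "m' - m"]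
      by (auto simp: g_def h_def)
    show "in_bands g h C D t" for t
      using DZZ_iff[of "{}"] ZZ' by (simp add: rows)
  qed
  have "{L'. (Z, L') \<in> DZZ Z Z'} = move Z' ` {N. admissible N}"
    by (rule DZZ_right_section) (auto simp: DZZ_iff[unfolded rows] admissible_iff_in_bands rows)
  then show ?thesis
    using moves_eq_Union_consec_pairs by (simp add: rows)
qed

lemma DZZ_left_factor:
  assumes Z: "special1 m Z" and Z': "special0 m' Z'" and mm: "m' = m \<or> m' = m + 1"
    and ZZ': "(Z, Z') \<in> DZZ Z Z'"
  shows "\<exists>\<Psi>0. (\<forall>P\<in>\<Psi>0. consec_pair Z P) \<and> pairwise disjnt \<Psi>0 \<and>
           {L. (L, Z') \<in> DZZ Z Z'} = {move Z (\<Union>\<Psi>) | \<Psi>. \<Psi> \<subseteq> \<Psi>0}"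
proof -
  obtain A B C D where rows: "Z = (A, B)" "Z' = (C, D)" by fastforce
  have fin: "finite A" "finite B" "finite C" "finite D"
    using Z Z' by (auto simp: rows special1_def special0_def is_symbol_def)
  define g where "g = (\<lambda>t. int (cnt_ge D (t - (Suc m - m'))))"
  define h where "h = (\<lambda>t. int (cnt_ge C (t - (Suc m - m'))) - 1)"
  have bands: "interlaced m m' (fst (move Z M)) (snd (move Z M)) C D \<longleftrightarrow>
      (\<forall>t. in_bands g h (fst (move Z M)) (snd (move Z M)) t)" for M
    unfolding g_def h_def using finite_move[of Z M] fin
    by (intro interlaced_iff_in_bands_left[OF mm]) (simp_all add: rows)
  have DZZ_iff: "(move Z M, Z') \<in> DZZ Z Z' \<longleftrightarrow> transfer Z M 0 = 0 \<and>
      (\<forall>t. in_bands g h (fst (move Z M)) (snd (move Z M)) t)" if "M \<subseteq> singles Z" for M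
    using DZZ_move_iff[OF Z Z' mm that empty_subsetI] bands by (simp add: rows)
  interpret count_bands A B g h
  proof
    show "finite A" "finite B" by (fact fin)+
    show "balanced A B" using special1_balanced[OF Z] by (simp add: rows)
    show "g (Suc t) \<le> g t \<and> g t \<le> g (Suc t) + 1" "h (Suc t) \<le> h t \<and> h t \<le> h (Suc t) + 1" for t
      using cnt_ge_Suc_diff_le[OF fin(4), of t "Suc m - m'"] cnt_ge_Suc_diff_le[OF fin(3), of t "Suc m - m'"]
      by (auto simp: g_def h_def)
    show "in_bands g h A B t" for t
      using DZZ_iff[of "{}"] ZZ' by (simp add: rows)
  qed
  have "{L. (L, Z') \<in> DZZ Z Z'} = move Z ` {M. admissible M}"
    by (rule DZZ_left_section) (auto simp: DZZ_iff[unfolded rows] admissible_iff_in_bands rows)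
  then show ?thesis
    using moves_eq_Union_consec_pairs by (simp add: rows)
qed

theorem proposition0307:
  fixes Z Z' :: symbol and m m' :: nat
  assumes "special1 m Z"
    and "special0 m' Z'"
    and "m' = m \<or> m' = m + 1"
    and "DZZ Z Z' \<noteq> {}"
  shows "(\<exists>\<Psi>0'. (\<forall>P\<in>\<Psi>0'. consec_pair Z' P) \<and> pairwise disjnt \<Psi>0' \<and>
            {L'. (Z, L') \<in> DZZ Z Z'} = {move Z' (\<Union>\<Psi>') | \<Psi>'. \<Psi>' \<subseteq> \<Psi>0'})
       \<and> (\<exists>\<Psi>0. (\<forall>P\<in>\<Psi>0. consec_pair Z P) \<and> pairwise disjnt \<Psi>0 \<and>
            {L. (L, Z') \<in> DZZ Z Z'} = {move Z (\<Union>\<Psi>) | \<Psi>. \<Psi> \<subseteq> \<Psi>0})"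
proof -
  have "(Z, Z') \<in> DZZ Z Z'"
    by (rule DZZ_special_pair[OF assms])
  then show ?thesis
    using DZZ_right_factor[OF assms(1-3)] DZZ_left_factor[OF assms(1-3)] by (intro conjI)
qed

end
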